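(* Let $X$ be a supertropical semiring and $n\in\mathbb{N}$. For any pure monomial $m$ in $x_1,\dots,x_n$, the minimal symmetrization $\mathrm{Minsym}_n(m)$ is, as a function $X^n\to X$, a product of elementary symmetric polynomials $e_1,\dots,e_n$ in $x_1,\dots,x_n$.
   Context: A semiring $(X,+,0,\cdot)$: $(X,+,0)$ commutative monoid, $(X,\cdot)$ semigroup, distributivity, $0$ absorbing. $\nu(x)=x+x$. A supertropical semiring is a unital commutative semiring with $2=4$ (where $n=1+\dots+1$), such that $a+b\in\{a,b\}$ whenever $\nu(a)\ne\nu(b)$, and $a+b=\nu(a)$ whenever $\nu(a)=\nu(b)$. For a pure monomial $m=x_1^{c_1}\cdots x_n^{c_n}$ (coefficient $1$), $\mathrm{Minsym}_n(m)$ is the sum, each term taken exactly once, of the distinct monomials in $\{x_{\sigma(1)}^{c_1}\cdots x_{\sigma(n)}^{c_n}:\sigma\in S_n\}$ (monomials equal up to reordering of factors are identified). $e_k(x_1,\dots,x_n)$ is the sum of all products of $k$ distinct variables; the empty product is $1$. *)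

theory Defs
  imports "HOL-Combinatorics.Permutations"
begin

text \<open>A supertropical semiring: a unital commutative semiring (0 absorbing; 0 = 1 not excluded)
  with 2 = 4, and the supertropical addition rules w.r.t. nu(a) = a + a.\<close>

definition nu :: "'a::plus \<Rightarrow> 'a" where
  "nu a = a + a"

definition supertropical :: "'a::{comm_semiring_0, comm_monoid_mult} itself \<Rightarrow> bool" where
  "supertropical _ \<longleftrightarrow>
     (1 + 1 :: 'a) = 1 + 1 + 1 + 1 \<and>
     (\<forall>a b::'a. nu a \<noteq> nu b \<longrightarrow> a + b \<in> {a, b}) \<and>
     (\<forall>a b::'a. nu a = nu b \<longrightarrow> a + b = nu a)"

text \<open>A pure monomial in x_0..x_{n-1} is given by its exponent list c (length n):
  x_0^{c!0} ... x_{n-1}^{c!(n-1)}.\<close>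

definition monomial_eval :: "nat list \<Rightarrow> (nat \<Rightarrow> 'a::comm_monoid_mult) \<Rightarrow> 'a" where
  "monomial_eval d x = (\<Prod>i<length d. x i ^ (d ! i))"

text \<open>Exponent lists of the monomials x_{sigma(0)}^{c_0} ... x_{sigma(n-1)}^{c_{n-1}}:
  the variable sigma(i) carries exponent c_i.\<close>

definition sym_orbit :: "nat \<Rightarrow> nat list \<Rightarrow> nat list set" where
  "sym_orbit n c = {map (\<lambda>j. c ! (inv \<sigma> j)) [0..<n] | \<sigma>. \<sigma> permutes {0..<n}}"

text \<open>Minimal symmetrization: each distinct monomial of the orbit counted exactly once.\<close>

definition Minsym :: "nat \<Rightarrow> nat list \<Rightarrow> (nat \<Rightarrow> 'a::{comm_semiring_0, comm_monoid_mult}) \<Rightarrow> 'a" where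
  "Minsym n c x = (\<Sum>d\<in>sym_orbit n c. monomial_eval d x)"

definition esym :: "nat \<Rightarrow> nat \<Rightarrow> (nat \<Rightarrow> 'a::{comm_semiring_0, comm_monoid_mult}) \<Rightarrow> 'a" where
  "esym n k x = (\<Sum>S\<in>{S. S \<subseteq> {0..<n} \<and> card S = k}. \<Prod>i\<in>S. x i)"

end

theory Submission
  imports Defs
begin

text \<open>Sort the exponent vector \<open>c\<close> decreasingly and induct on its sum. If \<open>c\<close> has \<open>k \<ge> 1\<close> nonzero
  entries, then \<open>c = c0 + 1\<^bsub>{..<k}\<^esub>\<close> for a decreasing \<open>c0\<close> of smaller sum, and it suffices to show
  \<open>Minsym(c0) e\<^sub>k = Minsym(c)\<close>. Expanding the product gives one monomial \<open>x\<^bsup>d + 1\<^sub>S\<^esup>\<close> for every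
  rearrangement \<open>d\<close> of \<open>c0\<close> and every \<open>k\<close>-set \<open>S\<close>. The terms that are rearrangements of \<open>c\<close> occur
  exactly once, because comparing sums of squares forces \<open>S\<close> onto the \<open>k\<close> largest entries of \<open>d\<close>.
  Every other term is absorbed by \<open>Minsym(c)\<close>: exchanging an index of \<open>S\<close> for one carrying a larger
  entry of \<open>d\<close> leads, after finitely many steps, to a term of \<open>Minsym(c)\<close>, and each step either
  permutes the exponents or moves one unit from an exponent \<open>a\<close> to an exponent \<open>b \<le> a - 2\<close>. In
  the latter case \<open>X\<^sup>aY\<^sup>b + X\<^sup>bY\<^sup>a\<close> absorbs \<open>X\<^bsup>a-1\<^esup>Y\<^bsup>b+1\<^esup>\<close> by the supertropical addition rules.\<close>

lemma permutes_less: "\<sigma> permutes {0..<n} \<Longrightarrow> j < n \<Longrightarrow> \<sigma> j < (n::nat)"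
  using permutes_in_image[of \<sigma> "{0..<n}" j] by simp

lemma permutes_inv_less: "\<sigma> permutes {0..<n} \<Longrightarrow> j < n \<Longrightarrow> inv \<sigma> j < (n::nat)"
  by (rule permutes_less[OF permutes_inv])

lemma permutes_image_iff_inv: "\<sigma> permutes A \<Longrightarrow> j \<in> \<sigma> ` B \<longleftrightarrow> inv \<sigma> j \<in> B"
  using permutes_inverses by (metis image_iff)

lemma permutes_image_lessThan:
  assumes "\<sigma> permutes {0..<n}" "k \<le> n"
  shows "\<sigma> ` {..<k} \<subseteq> {0..<n}" "card (\<sigma> ` {..<k}) = k"
  using permutes_less[OF assms(1)] assms(2) card_image[OF permutes_inj_on[OF assms(1)]] by auto

lemma sorted_wrt_ge_nth_le: "sorted_wrt (\<ge>) c \<Longrightarrow> i \<le> j \<Longrightarrow> j < length c \<Longrightarrow> c ! j \<le> (c ! i :: nat)"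
  using sorted_wrt_nth_less[of "(\<ge>)" c i j] by (cases "i = j") auto

lemma sum_list_map_pred_less: "sum_list c \<noteq> 0 \<Longrightarrow> sum_list (map (\<lambda>v. v - 1) c) < (sum_list c :: nat)"
proof (induction c)
  case (Cons a c)
  have "sum_list (map (\<lambda>v. v - 1) c) \<le> sum_list c"
    by (induction c) auto
  then show ?case using Cons by (cases "a = 0") simp_all
qed simp

lemma threshold_set_unique:
  fixes f :: "'a \<Rightarrow> nat"
  assumes fin: "finite S" "finite T" and card: "card S = card T"
    and above: "\<forall>j\<in>T. \<theta> \<le> f j" and below: "\<forall>j\<in>S - T. f j < \<theta>"
    and sum: "sum f T \<le> sum f S"
  shows "S = T"
proof (rule ccontr)
  assume "S \<noteq> T"
  then have "S - T \<noteq> {}" using card_subset_eq[OF fin(2)] card by blast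
  then have "card (S - T) > 0" using fin by (simp add: card_gt_0_iff)
  moreover have "card (S - T) = card (T - S)"
    using card fin by (simp add: card_Diff_subset_Int Int_commute)
  ultimately have "sum f (S - T) < card (T - S) * \<theta>"
    using sum_bounded_above_strict[of "S - T" f \<theta>] below by simp
  also have "\<dots> \<le> sum f (T - S)"
    using sum_bounded_below[of "T - S" \<theta> f] above by simp
  finally have "sum f (S \<inter> T) + sum f (S - T) < sum f (T \<inter> S) + sum f (T - S)"
    by (simp add: Int_commute)
  then show False using sum sum.Int_Diff[OF fin(1), of f T] sum.Int_Diff[OF fin(2), of f S] by simp
qed

lemma add_sum_absorb:
  assumes "finite B" "\<forall>b\<in>B. T + f b = (T::'a::comm_monoid_add)"
  shows "T + sum f B = T"
  using assms
proof (induction B rule: finite_induct)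
  case (insert b B)
  have "T + sum f (insert b B) = (T + f b) + sum f B" using insert(1,2) by (simp add: add.assoc)
  also have "\<dots> = T" using insert by simp
  finally show ?case .
qed simp

section \<open>Rearrangements of exponent vectors\<close>

lemma sym_orbit_memI: "\<sigma> permutes {0..<n} \<Longrightarrow> map (\<lambda>j. c ! inv \<sigma> j) [0..<n] \<in> sym_orbit n c"
  unfolding sym_orbit_def by blast

lemma sym_orbit_elim:
  assumes "d \<in> sym_orbit n c"
  obtains \<sigma> where "\<sigma> permutes {0..<n}" "d = map (\<lambda>j. c ! inv \<sigma> j) [0..<n]"
  using assms unfolding sym_orbit_def by blast

lemma length_sym_orbit: "d \<in> sym_orbit n c \<Longrightarrow> length d = n"
  unfolding sym_orbit_def by auto

lemma finite_sym_orbit: "finite (sym_orbit n c)"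
proof -
  have "sym_orbit n c = (\<lambda>\<sigma>. map (\<lambda>j. c ! inv \<sigma> j) [0..<n]) ` {\<sigma>. \<sigma> permutes {0..<n}}"
    unfolding sym_orbit_def by blast
  then show ?thesis using finite_permutations[of "{0..<n}"] by simp
qed

lemma sym_orbit_eq_mset:
  assumes "length c = n"
  shows "sym_orbit n c = {d. mset d = mset c}"
proof (intro equalityI subsetI)
  fix d assume "d \<in> sym_orbit n c"
  then obtain \<sigma> where \<sigma>: "\<sigma> permutes {0..<n}" and d: "d = map (\<lambda>j. c ! inv \<sigma> j) [0..<n]"
    by (rule sym_orbit_elim)
  have "inv \<sigma> permutes {..<length c}"
    using permutes_inv[OF \<sigma>] assms by (simp add: atLeast0LessThan)
  then have "mset (permute_list (inv \<sigma>) c) = mset c" by (rule mset_permute_list)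
  moreover have "permute_list (inv \<sigma>) c = d"
    unfolding d permute_list_def assms by simp
  ultimately show "d \<in> {d. mset d = mset c}" by simp
next
  fix d assume "d \<in> {d. mset d = mset c}"
  then have "mset d = mset c" by simp
  then obtain p where p: "p permutes {..<length c}" "permute_list p c = d"
    by (rule mset_eq_permutation)
  have "inv p permutes {0..<n}"
    using permutes_inv[OF p(1)] assms by (simp add: atLeast0LessThan)
  then have "map (\<lambda>j. c ! inv (inv p) j) [0..<n] \<in> sym_orbit n c"
    by (rule sym_orbit_memI)
  moreover have "map (\<lambda>j. c ! inv (inv p) j) [0..<n] = d"
    unfolding permutes_inv_inv[OF p(1)] p(2)[symmetric] permute_list_def assms by simp
  ultimately show "d \<in> sym_orbit n c" by simp
qed

lemma sym_orbit_self: "length c = n \<Longrightarrow> c \<in> sym_orbit n c"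
  using sym_orbit_eq_mset by blast

lemma sym_orbit_eq:
  assumes "length c = n" "d \<in> sym_orbit n c"
  shows "sym_orbit n d = sym_orbit n c"
proof -
  have "mset d = mset c" using assms sym_orbit_eq_mset by blast
  then show ?thesis
    using sym_orbit_eq_mset[OF assms(1)] sym_orbit_eq_mset[OF length_sym_orbit[OF assms(2)]] by simp
qed

lemma sum_sym_orbit:
  assumes "length c = n" "d \<in> sym_orbit n c"
  shows "(\<Sum>j<n. f (d ! j)) = (\<Sum>i<n. f (c ! i))"
proof -
  have "mset d = mset c" using assms sym_orbit_eq_mset by blast
  then have "mset (map f d) = mset (map f c)" by simp
  then have "sum_list (map f d) = sum_list (map f c)" by (metis sum_mset_sum_list)
  then show ?thesis using assms length_sym_orbit[OF assms(2)]
    by (simp add: sum_list_sum_nth atLeast0LessThan)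
qed

lemma Minsym_sort: "length c = n \<Longrightarrow> Minsym n c = Minsym n (rev (sort c))"
  using sym_orbit_eq_mset[of c n] sym_orbit_eq_mset[of "rev (sort c)" n]
  by (simp add: Minsym_def fun_eq_iff)

lemma Minsym_eq_one_if_sum_list_zero:
  assumes "length c = n" "sum_list c = 0"
  shows "Minsym n c x = 1"
proof -
  have "sym_orbit n c = {c}"
  proof (intro equalityI subsetI)
    fix d assume d: "d \<in> sym_orbit n c"
    then have "mset d = mset c" using sym_orbit_eq_mset[OF assms(1)] by blast
    then have "set d = set c" by (metis set_mset_mset)
    moreover have "set c \<subseteq> {0}" using assms(2) by auto
    ultimately have "d = replicate (length d) 0" "c = replicate (length c) 0"
      by (auto intro: replicate_eqI)
    then show "d \<in> {c}" using length_sym_orbit[OF d] assms(1) by (metis singletonI)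
  qed (use sym_orbit_self[OF assms(1)] in simp)
  moreover have "c ! i = 0" if "i < length c" for i
    using assms(2) nth_mem[OF that] by (simp add: sum_list_eq_0_iff)
  then have "monomial_eval c x = 1" by (simp add: monomial_eval_def)
  ultimately show ?thesis by (simp add: Minsym_def)
qed

lemma Minsym_split_pair:
  assumes "f \<in> sym_orbit n c" "h \<in> sym_orbit n c" "f \<noteq> h"
  shows "\<exists>R. Minsym n c x = monomial_eval f x + monomial_eval h x + R"
proof -
  let ?O = "sym_orbit n c"
  have "Minsym n c x = monomial_eval f x + (\<Sum>d\<in>?O - {f}. monomial_eval d x)"
    unfolding Minsym_def using sum.remove[OF finite_sym_orbit assms(1)] .
  also have "(\<Sum>d\<in>?O - {f}. monomial_eval d x)
      = monomial_eval h x + (\<Sum>d\<in>?O - {f} - {h}. monomial_eval d x)"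
    using sum.remove[of "?O - {f}" h] finite_sym_orbit assms by auto
  finally show ?thesis by (auto simp: add.assoc)
qed

definition add_indicator :: "nat set \<Rightarrow> nat list \<Rightarrow> nat list" where
  "add_indicator S d = map (\<lambda>j. d ! j + (if j \<in> S then 1 else 0)) [0..<length d]"

lemma length_add_indicator [simp]: "length (add_indicator S d) = length d"
  by (simp add: add_indicator_def)

lemma nth_add_indicator [simp]:
  "j < length d \<Longrightarrow> add_indicator S d ! j = d ! j + (if j \<in> S then 1 else 0)"
  by (simp add: add_indicator_def)

lemma monomial_eval_add_indicator:
  fixes x :: "nat \<Rightarrow> 'a::comm_monoid_mult"
  assumes "S \<subseteq> {0..<length d}"
  shows "monomial_eval d x * (\<Prod>i\<in>S. x i) = monomial_eval (add_indicator S d) x"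
proof -
  let ?n = "length d"
  have "S = {i \<in> {..<?n}. i \<in> S}" using assms by auto
  then have "(\<Prod>i\<in>S. x i) = (\<Prod>i<?n. if i \<in> S then x i else 1)"
    using prod.inter_filter[of "{..<?n}" x "\<lambda>i. i \<in> S"] by simp
  then have "monomial_eval d x * (\<Prod>i\<in>S. x i) = (\<Prod>i<?n. x i ^ (d!i) * (if i \<in> S then x i else 1))"
    by (simp add: monomial_eval_def prod.distrib)
  also have "\<dots> = monomial_eval (add_indicator S d) x"
    by (auto simp: monomial_eval_def mult.commute intro!: prod.cong)
  finally show ?thesis .
qed

lemma add_indicator_permuted:
  assumes "length c = n" "\<sigma> permutes {0..<n}"
  shows "add_indicator (\<sigma> ` S) (map (\<lambda>j. c ! inv \<sigma> j) [0..<n])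
       = map (\<lambda>j. add_indicator S c ! inv \<sigma> j) [0..<n]"
proof (rule nth_equalityI)
  fix j assume "j < length (add_indicator (\<sigma> ` S) (map (\<lambda>j. c ! inv \<sigma> j) [0..<n]))"
  then have j: "j < n" by simp
  have "j \<in> \<sigma> ` S \<longleftrightarrow> inv \<sigma> j \<in> S" using permutes_image_iff_inv[OF assms(2)] .
  then show "add_indicator (\<sigma> ` S) (map (\<lambda>j. c ! inv \<sigma> j) [0..<n]) ! j
      = map (\<lambda>j. add_indicator S c ! inv \<sigma> j) [0..<n] ! j"
    using j permutes_inv_less[OF assms(2) j] assms(1) by simp
qed simp

text \<open>The witnesses are the number \<open>k\<close> of nonzero entries and \<open>c0 = map (\<lambda>v. v - 1) c\<close>; truncated
  subtraction leaves the zero entries at zero.\<close>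

lemma sorted_desc_decompose:
  assumes c: "sorted_wrt (\<ge>) c" and nz: "sum_list c \<noteq> 0"
  obtains k c0 where "0 < k" "k \<le> length c" "length c0 = length c" "sorted_wrt (\<ge>) c0"
    "c = add_indicator {..<k} c0" "sum_list c0 < sum_list c"
proof -
  define k where "k = length (takeWhile (\<lambda>v. 0 < v) c)"
  define c0 where "c0 = map (\<lambda>v. v - 1) c"
  have pos: "0 < c ! i" if "i < k" for i
  proof -
    have "takeWhile (\<lambda>v. 0 < v) c ! i \<in> set (takeWhile (\<lambda>v. 0 < v) c)"
      using that unfolding k_def by (rule nth_mem)
    then show ?thesis using takeWhile_nth[of i "\<lambda>v. 0 < v" c] that set_takeWhileD
      unfolding k_def by fastforce
  qed
  have zero: "c ! i = 0" if "k \<le> i" "i < length c" for i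
  proof -
    have "k < length c" using that by simp
    then have "c ! k = 0" unfolding k_def using nth_length_takeWhile by blast
    then show ?thesis using sorted_wrt_ge_nth_le[OF c that] by simp
  qed
  have decomp: "c = add_indicator {..<k} c0"
  proof (rule nth_equalityI)
    fix i assume "i < length c"
    then show "c ! i = add_indicator {..<k} c0 ! i"
      using pos[of i] zero[of i] by (cases "i < k") (simp_all add: c0_def)
  qed (simp add: c0_def)
  have "0 < k"
  proof (rule ccontr)
    assume "\<not> 0 < k"
    then have "\<forall>i<length c. c ! i = 0" using zero by simp
    then show False using nz by (simp add: sum_list_sum_nth)
  qed
  moreover have "sorted_wrt (\<ge>) c0"
    unfolding c0_def sorted_wrt_map by (rule sorted_wrt_mono_rel[OF _ c]) auto
  moreover have "k \<le> length c" unfolding k_def by (rule length_takeWhile_le)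
  moreover have "length c0 = length c" "sum_list c0 < sum_list c"
    using sum_list_map_pred_less[OF nz] by (simp_all add: c0_def)
  ultimately show ?thesis using that decomp by blast
qed

lemma monomial_eval_split_pair:
  fixes x :: "nat \<Rightarrow> 'a::comm_monoid_mult"
  assumes "p < length v" "q < length v" "p \<noteq> q"
  shows "monomial_eval v x
       = (\<Prod>t\<in>{..<length v} - {p, q}. x t ^ (v!t)) * (x p ^ (v!p) * x q ^ (v!q))"
proof -
  let ?n = "length v"
  have "monomial_eval v x = x p ^ (v!p) * (\<Prod>t\<in>{..<?n} - {p}. x t ^ (v!t))"
    using prod.remove[of "{..<?n}" p] assms by (simp add: monomial_eval_def)
  also have "(\<Prod>t\<in>{..<?n} - {p}. x t ^ (v!t)) = x q ^ (v!q) * (\<Prod>t\<in>{..<?n} - {p} - {q}. x t ^ (v!t))"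
    using prod.remove[of "{..<?n} - {p}" q] assms by simp
  also have "{..<?n} - {p} - {q} = {..<?n} - {p, q}" by auto
  finally show ?thesis by (simp add: algebra_simps)
qed

definition move_unit :: "nat \<Rightarrow> nat \<Rightarrow> nat list \<Rightarrow> nat list" where
  "move_unit p q f = f[p := f ! p - 1, q := f ! q + 1]"

lemma length_move_unit [simp]: "length (move_unit p q f) = length f"
  by (simp add: move_unit_def)

lemma move_unit_in_sym_orbit:
  assumes "p < length f" "q < length f" "f ! p = f ! q + 1"
  shows "move_unit p q f \<in> sym_orbit (length f) f"
proof -
  have "p \<noteq> q" using assms(3) by auto
  then have "move_unit p q f = f[q := f ! p, p := f ! q]"
    using assms(3) by (simp add: move_unit_def list_update_swap)
  then have "mset (move_unit p q f) = mset f" using mset_swap[OF assms(1,2)] by simp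
  then show ?thesis using sym_orbit_eq_mset[of f "length f"] by simp
qed

lemma sym_orbit_move_unit:
  assumes f: "length f = n" and ij: "i < n" "j < n" "i \<noteq> j"
    and e: "e \<in> sym_orbit n (move_unit i j f)"
  obtains f' p q where "f' \<in> sym_orbit n f" "p < n" "q < n" "p \<noteq> q"
    "f' ! p = f ! i" "f' ! q = f ! j" "e = move_unit p q f'"
proof -
  obtain \<tau> where \<tau>: "\<tau> permutes {0..<n}" and e_eq: "e = map (\<lambda>t. move_unit i j f ! inv \<tau> t) [0..<n]"
    using e by (rule sym_orbit_elim)
  define f' where "f' = map (\<lambda>t. f ! inv \<tau> t) [0..<n]"
  have inv_i: "inv \<tau> k = i \<longleftrightarrow> k = \<tau> i" and inv_j: "inv \<tau> k = j \<longleftrightarrow> k = \<tau> j" for k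
    using permutes_inv_eq[OF \<tau>] by auto
  have "f' \<in> sym_orbit n f" unfolding f'_def by (rule sym_orbit_memI[OF \<tau>])
  moreover have "\<tau> i < n" "\<tau> j < n" using permutes_less[OF \<tau>] ij by auto
  moreover have "\<tau> i \<noteq> \<tau> j" using ij permutes_inj[OF \<tau>] by (simp add: inj_eq)
  moreover have "f' ! \<tau> i = f ! i" "f' ! \<tau> j = f ! j"
    using \<open>\<tau> i < n\<close> \<open>\<tau> j < n\<close> by (simp_all add: f'_def permutes_inverses[OF \<tau>])
  moreover have "e = move_unit (\<tau> i) (\<tau> j) f'"
  proof (rule nth_equalityI)
    fix k assume "k < length e"
    then have k: "k < n" by (simp add: e_eq)
    have "inv \<tau> k < n" using permutes_inv_less[OF \<tau> k] .
    then show "e ! k = move_unit (\<tau> i) (\<tau> j) f' ! k"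
      using k f ij \<open>\<tau> i \<noteq> \<tau> j\<close> inv_i[of k] inv_j[of k]
      by (cases "k = \<tau> i"; cases "k = \<tau> j")
        (simp_all add: e_eq move_unit_def f'_def permutes_inverses[OF \<tau>])
  qed (simp add: e_eq f'_def)
  ultimately show ?thesis using that by blast
qed

lemma add_indicator_exchange:
  assumes "i < length d" "j < length d" "i \<notin> S" "j \<in> S"
  shows "add_indicator S d = move_unit i j (add_indicator (insert i (S - {j})) d)"
  using assms by (intro nth_equalityI) (auto simp: move_unit_def nth_list_update)

section \<open>The terms of Minsym times e_k lying in the new orbit\<close>

lemma Minsym_mult_esym_expand:
  assumes "length c = n"
  shows "Minsym n c x * esym n k x
       = (\<Sum>(d, S)\<in>sym_orbit n c \<times> {S. S \<subseteq> {0..<n} \<and> card S = k}. monomial_eval (add_indicator S d) x)"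
proof -
  have "Minsym n c x * esym n k x
      = (\<Sum>(d, S)\<in>sym_orbit n c \<times> {S. S \<subseteq> {0..<n} \<and> card S = k}. monomial_eval d x * (\<Prod>i\<in>S. x i))"
    unfolding Minsym_def esym_def sum_product sum.cartesian_product ..
  also have "\<dots> = (\<Sum>(d, S)\<in>sym_orbit n c \<times> {S. S \<subseteq> {0..<n} \<and> card S = k}. monomial_eval (add_indicator S d) x)"
    using length_sym_orbit by (intro sum.cong) (auto simp: monomial_eval_add_indicator)
  finally show ?thesis .
qed

lemma sum_squares_add_indicator:
  assumes "S \<subseteq> {..<length d}"
  shows "(\<Sum>j<length d. (add_indicator S d ! j)\<^sup>2) = (\<Sum>j<length d. (d ! j)\<^sup>2) + (\<Sum>j\<in>S. 2 * d ! j + 1)"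
proof -
  have "S = {j \<in> {..<length d}. j \<in> S}" using assms by auto
  then have "(\<Sum>j\<in>S. 2 * d ! j + 1) = (\<Sum>j<length d. if j \<in> S then 2 * d ! j + 1 else 0)"
    using sum.inter_filter[of "{..<length d}" "\<lambda>j. 2 * d ! j + 1" "\<lambda>j. j \<in> S"] by simp
  moreover have "(\<Sum>j<length d. (add_indicator S d ! j)\<^sup>2)
      = (\<Sum>j<length d. (d ! j)\<^sup>2 + (if j \<in> S then 2 * d ! j + 1 else 0))"
    by (rule sum.cong) (auto simp: power2_eq_square algebra_simps)
  ultimately show ?thesis by (simp add: sum.distrib)
qed

text \<open>Adding \<open>1\<close> on a \<open>k\<close>-set \<open>S\<close> raises the sum of squares by \<open>2 \<Sigma>\<^bsub>j\<in>S\<^esub> d\<^sub>j + k\<close>;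
  comparing the sums of squares of the two rearrangements gives the claim.\<close>

lemma sum_add_indicator_set:
  assumes c: "length c = n" and k: "k \<le> n" and d: "d \<in> sym_orbit n c"
    and S: "S \<subseteq> {0..<n}" "card S = k"
    and orbit: "add_indicator S d \<in> sym_orbit n (add_indicator {..<k} c)"
  shows "(\<Sum>j\<in>S. d ! j) = (\<Sum>i<k. c ! i)"
proof -
  have d_len: "length d = n" using length_sym_orbit[OF d] .
  have "(\<Sum>j<n. (d ! j)\<^sup>2) + (\<Sum>j\<in>S. 2 * d ! j + 1)
      = (\<Sum>j<n. (add_indicator S d ! j)\<^sup>2)"
    using sum_squares_add_indicator[of S d] S d_len by (simp add: atLeast0LessThan)
  also have "\<dots> = (\<Sum>i<n. (add_indicator {..<k} c ! i)\<^sup>2)"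
    using sum_sym_orbit[OF _ orbit] c by simp
  also have "\<dots> = (\<Sum>i<n. (c ! i)\<^sup>2) + (\<Sum>i<k. 2 * c ! i + 1)"
    using sum_squares_add_indicator[of "{..<k}" c] c k by simp
  finally have "(\<Sum>j\<in>S. 2 * d ! j + 1) = (\<Sum>i<k. 2 * c ! i + 1)"
    using sum_sym_orbit[OF c d, of "\<lambda>v. v\<^sup>2"] by simp
  moreover have "(\<Sum>j\<in>A. 2 * g j + 1) = 2 * (\<Sum>j\<in>A. g j) + card A" for A and g :: "nat \<Rightarrow> nat"
    by (simp only: sum.distrib sum_distrib_left card_eq_sum)
  ultimately show ?thesis using S(2) by simp
qed

text \<open>Why \<open>S\<close> is determined: by the previous lemma it carries the maximal possible sum of
  \<open>k\<close> entries, and for decreasing \<open>c\<close> the entries at the positions \<open>\<sigma> ` {..<k}\<close> exceed all others.\<close>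

lemma add_indicator_in_sym_orbit_unique:
  assumes c: "length c = n" "sorted_wrt (\<ge>) c" and k: "k \<le> n" and \<sigma>: "\<sigma> permutes {0..<n}"
    and d: "d \<in> sym_orbit n c" and S: "S \<subseteq> {0..<n}" "card S = k"
    and E: "add_indicator S d = map (\<lambda>j. add_indicator {..<k} c ! inv \<sigma> j) [0..<n]"
  shows "S = \<sigma> ` {..<k}"
proof (cases "k = 0")
  case True
  then show ?thesis using S finite_subset[OF S(1)] by simp
next
  case False
  define T where "T = \<sigma> ` {..<k}"
  have d_len: "length d = n" using length_sym_orbit[OF d] .
  have E_nth: "add_indicator S d ! j = c ! inv \<sigma> j + (if inv \<sigma> j < k then 1 else 0)" if "j < n" for j
  proof -
    have "add_indicator S d ! j = add_indicator {..<k} c ! inv \<sigma> j" using E that by simp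
    then show ?thesis using c(1) permutes_inv_less[OF \<sigma> that] by simp
  qed
  have in_T: "j \<in> T \<longleftrightarrow> inv \<sigma> j < k" for j
    unfolding T_def using permutes_image_iff_inv[OF \<sigma>] by simp
  have T_sub: "T \<subseteq> {0..<n}" and card_T: "card T = k"
    unfolding T_def using permutes_image_lessThan[OF \<sigma> k] by auto
  have "add_indicator S d \<in> sym_orbit n (add_indicator {..<k} c)"
    unfolding E by (rule sym_orbit_memI[OF \<sigma>])
  then have sum_d: "(\<Sum>j\<in>S. d ! j) = (\<Sum>i<k. c ! i)"
    by (rule sum_add_indicator_set[OF c(1) k d S])
  show ?thesis unfolding T_def[symmetric]
  proof (rule threshold_set_unique[where f = "\<lambda>j. add_indicator S d ! j" and \<theta> = "c ! (k - 1) + 1"])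
    show "finite S" "finite T" "card S = card T"
      using finite_subset[OF S(1)] S(2) card_T by (auto simp: T_def)
    show "\<forall>j\<in>T. c ! (k - 1) + 1 \<le> add_indicator S d ! j"
    proof
      fix j assume "j \<in> T"
      then have "j < n" "inv \<sigma> j < k" using T_sub in_T by auto
      then show "c ! (k - 1) + 1 \<le> add_indicator S d ! j"
        using E_nth sorted_wrt_ge_nth_le[OF c(2), of "inv \<sigma> j" "k - 1"] k c(1) by simp
    qed
    show "\<forall>j\<in>S - T. add_indicator S d ! j < c ! (k - 1) + 1"
    proof
      fix j assume "j \<in> S - T"
      then have j: "j < n" "\<not> inv \<sigma> j < k" "k - 1 \<le> inv \<sigma> j" using S(1) in_T by auto
      then show "add_indicator S d ! j < c ! (k - 1) + 1"
        using E_nth sorted_wrt_ge_nth_le[OF c(2), of "k - 1" "inv \<sigma> j"] permutes_inv_less[OF \<sigma> j(1)] c(1)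
        by simp
    qed
    have "(\<Sum>j\<in>T. add_indicator S d ! j) = (\<Sum>i<k. c ! i + 1)"
      unfolding T_def using k permutes_less[OF \<sigma>] E_nth
      by (simp add: sum.reindex[OF permutes_inj_on[OF \<sigma>]] permutes_inverses[OF \<sigma>])
    also have "\<dots> = (\<Sum>j\<in>S. d ! j + 1)" using sum_d S(2) by (simp add: sum_Suc)
    also have "\<dots> = (\<Sum>j\<in>S. add_indicator S d ! j)" using S(1) d_len by (intro sum.cong) auto
    finally show "(\<Sum>j\<in>T. add_indicator S d ! j) \<le> (\<Sum>j\<in>S. add_indicator S d ! j)" by simp
  qed
qed

lemma bij_betw_add_indicator_sym_orbit:
  assumes c: "length c = n" "sorted_wrt (\<ge>) c" and k: "k \<le> n"
  shows "bij_betw (\<lambda>(d, S). add_indicator S d)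
    {(d, S)\<in>sym_orbit n c \<times> {S. S \<subseteq> {0..<n} \<and> card S = k}.
      add_indicator S d \<in> sym_orbit n (add_indicator {..<k} c)}
    (sym_orbit n (add_indicator {..<k} c))" (is "bij_betw ?g ?G ?O")
proof (rule bij_betw_imageI)
  show "inj_on ?g ?G"
  proof (rule inj_onI)
    fix p1 p2 assume p1: "p1 \<in> ?G" and p2: "p2 \<in> ?G" and eq: "?g p1 = ?g p2"
    obtain d1 S1 d2 S2 where p: "p1 = (d1, S1)" "p2 = (d2, S2)" by fastforce
    have d1: "d1 \<in> sym_orbit n c" and S1: "S1 \<subseteq> {0..<n}" "card S1 = k"
      and d2: "d2 \<in> sym_orbit n c" and S2: "S2 \<subseteq> {0..<n}" "card S2 = k"
      and E: "add_indicator S1 d1 \<in> ?O"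
      using p1 p2 p by auto
    have eq: "add_indicator S1 d1 = add_indicator S2 d2" using eq p by simp
    obtain \<sigma> where \<sigma>: "\<sigma> permutes {0..<n}"
      and E_eq: "add_indicator S1 d1 = map (\<lambda>j. add_indicator {..<k} c ! inv \<sigma> j) [0..<n]"
      using E by (rule sym_orbit_elim)
    have S: "S1 = \<sigma> ` {..<k}" "S2 = \<sigma> ` {..<k}"
      using add_indicator_in_sym_orbit_unique[OF c k \<sigma>] d1 S1 d2 S2 E_eq eq by metis+
    have "d1 = d2"
    proof (rule nth_equalityI)
      show "length d1 = length d2" using length_sym_orbit d1 d2 by metis
      fix j assume "j < length d1"
      then show "d1 ! j = d2 ! j"
        using arg_cong[OF eq, of "\<lambda>e. e ! j"] \<open>length d1 = length d2\<close> S by simp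
    qed
    then show "p1 = p2" using p S by simp
  qed
  show "?g ` ?G = ?O"
  proof (intro equalityI subsetI)
    fix e assume e: "e \<in> ?O"
    then obtain \<sigma> where \<sigma>: "\<sigma> permutes {0..<n}"
      and e_eq: "e = map (\<lambda>j. add_indicator {..<k} c ! inv \<sigma> j) [0..<n]"
      by (rule sym_orbit_elim)
    define d where "d = map (\<lambda>j. c ! inv \<sigma> j) [0..<n]"
    have "e = add_indicator (\<sigma> ` {..<k}) d"
      using add_indicator_permuted[OF c(1) \<sigma>] e_eq by (simp add: d_def)
    moreover have "(d, \<sigma> ` {..<k}) \<in> ?G"
      using e calculation sym_orbit_memI[OF \<sigma>] permutes_image_lessThan[OF \<sigma> k] by (simp add: d_def)
    ultimately show "e \<in> ?g ` ?G" by force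
  qed auto
qed

definition Minsym_covers ::
    "nat \<Rightarrow> nat list \<Rightarrow> (nat \<Rightarrow> 'a::{comm_semiring_0, comm_monoid_mult}) \<Rightarrow> nat list \<Rightarrow> bool" where
  "Minsym_covers n c x e \<longleftrightarrow> sym_orbit n e = sym_orbit n c \<or>
     (\<forall>e'\<in>sym_orbit n e. Minsym n c x + monomial_eval e' x = Minsym n c x)"

lemma Minsym_covers_sym_orbit:
  "length f = n \<Longrightarrow> e \<in> sym_orbit n f \<Longrightarrow> Minsym_covers n c x f \<Longrightarrow> Minsym_covers n c x e"
  unfolding Minsym_covers_def using sym_orbit_eq by metis

lemma Minsym_absorbs_if_pair:
  assumes cov: "Minsym_covers n c x f" and f: "length f = n"
    and f': "f' \<in> sym_orbit n f" and h': "h' \<in> sym_orbit n f" and "f' \<noteq> h'"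
    and absorbed: "monomial_eval f' x + monomial_eval h' x + e = monomial_eval f' x + monomial_eval h' x"
  shows "Minsym n c x + e = Minsym n c x"
proof -
  let ?T = "Minsym n c x"
  obtain R where R: "?T = monomial_eval f' x + monomial_eval h' x + R"
  proof (cases "sym_orbit n f = sym_orbit n c")
    case True
    then show ?thesis using that Minsym_split_pair[of f' n c h' x] f' h' \<open>f' \<noteq> h'\<close> by auto
  next
    case False
    then have "?T + monomial_eval f' x = ?T" "?T + monomial_eval h' x = ?T"
      using cov f' h' unfolding Minsym_covers_def by auto
    then show ?thesis using that[of ?T] by (simp add: ac_simps)
  qed
  have "?T + e = (monomial_eval f' x + monomial_eval h' x + e) + R"
    using R by (simp add: ac_simps)
  then show ?thesis using R absorbed by simp
qed

section \<open>Supertropical arithmetic\<close>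

lemma nu_add: "nu ((a::'a::ab_semigroup_add) + b) = nu a + nu b"
  by (simp add: nu_def ac_simps)

lemma nu_mult: "nu ((a::'a::semiring) * b) = nu a * b"
  by (simp add: nu_def distrib_right)

definition nu_le :: "'a::plus \<Rightarrow> 'a \<Rightarrow> bool" (infix "\<le>\<^sub>\<nu>" 50) where
  "a \<le>\<^sub>\<nu> b \<longleftrightarrow> nu a + nu b = nu b"

context
  assumes supertropical: "supertropical TYPE('a::{comm_semiring_0, comm_monoid_mult})"
begin

lemma two_eq_four: "(1 + 1 :: 'a) = 1 + 1 + 1 + 1"
  using supertropical unfolding supertropical_def by blast

lemma add_nu_eq: "nu (a::'a) = nu b \<Longrightarrow> a + b = nu a"
  using supertropical unfolding supertropical_def by blast

lemma add_nu_neq: "nu (a::'a) \<noteq> nu b \<Longrightarrow> a + b = a \<or> a + b = b"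
  using supertropical unfolding supertropical_def by blast

lemma nu_nu [simp]: "nu (nu (a::'a)) = nu a"
proof -
  have "nu (nu a) = (1 + 1 + 1 + 1) * a" by (simp add: nu_def algebra_simps)
  also have "\<dots> = (1 + 1) * a" using two_eq_four by simp
  finally show ?thesis by (simp add: nu_def algebra_simps)
qed

lemma nu_le_if_nu_eq: "nu (a::'a) = nu b \<Longrightarrow> a \<le>\<^sub>\<nu> b"
  unfolding nu_le_def using nu_nu[of b] by (simp add: nu_def)

lemma nu_le_refl: "(a::'a) \<le>\<^sub>\<nu> a"
  by (rule nu_le_if_nu_eq) (rule refl)

lemma nu_le_total: "(a::'a) \<le>\<^sub>\<nu> b \<or> b \<le>\<^sub>\<nu> a"
proof (cases "nu a = nu b")
  case True
  then show ?thesis using nu_le_if_nu_eq by blast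
next
  case False
  then have "nu (nu a) \<noteq> nu (nu b)" by simp
  from add_nu_neq[OF this] show ?thesis unfolding nu_le_def by (auto simp: add.commute)
qed

lemma nu_le_antisym: "(a::'a) \<le>\<^sub>\<nu> b \<Longrightarrow> b \<le>\<^sub>\<nu> a \<Longrightarrow> nu a = nu b"
  unfolding nu_le_def by (simp add: add.commute)

lemma nu_le_trans: "(a::'a) \<le>\<^sub>\<nu> b \<Longrightarrow> b \<le>\<^sub>\<nu> c \<Longrightarrow> a \<le>\<^sub>\<nu> c"
  unfolding nu_le_def by (metis add.assoc)

lemma nu_le_mult: "(a::'a) \<le>\<^sub>\<nu> b \<Longrightarrow> a * m \<le>\<^sub>\<nu> b * m"
  unfolding nu_le_def nu_mult by (metis distrib_right)

lemma nu_le_mult_mono: "(a::'a) \<le>\<^sub>\<nu> b \<Longrightarrow> c \<le>\<^sub>\<nu> d \<Longrightarrow> a * c \<le>\<^sub>\<nu> b * d"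
  by (metis nu_le_mult nu_le_trans mult.commute)

lemma nu_le_power: "(a::'a) \<le>\<^sub>\<nu> b \<Longrightarrow> a ^ k \<le>\<^sub>\<nu> b ^ k"
  by (induction k) (simp_all add: nu_le_refl nu_le_mult_mono)

lemma nu_le_if_add_eq: "(a::'a) + b = a \<Longrightarrow> b \<le>\<^sub>\<nu> a"
  unfolding nu_le_def using nu_add[of a b] by (simp add: add.commute)

lemma add_eq_right_if_nu_less:
  assumes "(a::'a) \<le>\<^sub>\<nu> b" "nu a \<noteq> nu b"
  shows "a + b = b"
proof -
  have "a + b \<noteq> a"
  proof
    assume "a + b = a"
    then have "b \<le>\<^sub>\<nu> a" by (rule nu_le_if_add_eq)
    then show False using assms nu_le_antisym by blast
  qed
  then show ?thesis using add_nu_neq[OF assms(2)] by blast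
qed

lemma ghost_if_add_eq: "(a::'a) + b = a \<Longrightarrow> nu a = nu b \<Longrightarrow> a = nu a"
  using add_nu_eq[of a b] by simp

lemma ghost_add_absorb: "(b::'a) \<le>\<^sub>\<nu> a \<Longrightarrow> a = nu a \<Longrightarrow> a + b = a"
  using add_eq_right_if_nu_less[of b a] add_nu_eq[of a b]
  by (cases "nu a = nu b") (auto simp: add.commute)

lemma nu_power_mult_eq: "nu X = nu Y \<Longrightarrow> nu ((X::'a) ^ a * Y ^ b) = nu (X ^ (a + b))"
proof (induction b arbitrary: a)
  case 0
  then show ?case by simp
next
  case (Suc b)
  have "nu (X ^ a * Y ^ Suc b) = X ^ a * Y ^ b * nu Y"
    by (simp add: nu_mult algebra_simps)
  also have "\<dots> = nu (X ^ Suc a * Y ^ b)"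
    using Suc.prems by (simp add: nu_mult algebra_simps)
  also have "\<dots> = nu (X ^ (Suc a + b))" using Suc by blast
  finally show ?case by simp
qed

lemma add_absorb_dominated:
  assumes "t \<le>\<^sub>\<nu> M" "Z \<le>\<^sub>\<nu> M" "nu t = nu M \<Longrightarrow> M = nu M"
  shows "(M::'a) + Z + t = M + Z"
proof (cases "nu t = nu M")
  case True
  then have "M = nu M" using assms by blast
  then have "M + Z = M" and "M + t = M" using ghost_add_absorb assms by blast+
  then show ?thesis by simp
next
  case False
  then have "t + M = M" using add_eq_right_if_nu_less assms by blast
  then show ?thesis by (metis add.assoc add.commute)
qed

text \<open>Either \<open>X ^ r\<close> or \<open>Y ^ r\<close> strictly \<open>\<nu>\<close>-dominates \<open>X ^ (r - 1) * Y\<close>, or there is a tie and the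
  dominating term is a ghost; the gap \<open>r \<ge> 2\<close> is what makes \<open>X ^ (r - 1) * Y\<close> lie between
  \<open>Y ^ r\<close> and \<open>Y ^ (r - 1) * X\<close> when \<open>X <\<^sub>\<nu> Y\<close>.\<close>

lemma power_add_absorbs_mixed:
  assumes r: "2 \<le> r"
  shows "(X::'a) ^ r + Y ^ r + X ^ (r - 1) * Y = X ^ r + Y ^ r"
proof (cases "nu X = nu Y")
  case True
  have "nu (Y ^ r) = nu (X ^ r)" using nu_power_mult_eq[OF True, of 0 r] by simp
  then have ghost: "X ^ r + Y ^ r = nu (X ^ r)" using add_nu_eq by metis
  have "nu (X ^ (r - 1) * Y) = nu (X ^ r)"
    using nu_power_mult_eq[OF True, of "r - 1" 1] r by simp
  then have "nu (X ^ r) + X ^ (r - 1) * Y = nu (X ^ r)"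
    using add_nu_eq[of "nu (X ^ r)" "X ^ (r - 1) * Y"] by simp
  then show ?thesis by (simp add: ghost)
next
  case False
  obtain r' where rr: "r = Suc (Suc r')" using r by (metis add_2_eq_Suc le_Suc_ex)
  show ?thesis
  proof (cases "Y \<le>\<^sub>\<nu> X")
    case True
    have sum: "Y + X = X" using add_eq_right_if_nu_less[OF True] False by simp
    have absorbs: "X ^ r = X ^ r + X ^ (r - 1) * Y"
      using arg_cong[OF sum, of "\<lambda>z. X ^ (r - 1) * z"] rr by (simp add: algebra_simps)
    show ?thesis
    proof (rule add_absorb_dominated)
      show "X ^ (r - 1) * Y \<le>\<^sub>\<nu> X ^ r" using nu_le_if_add_eq absorbs by metis
      show "Y ^ r \<le>\<^sub>\<nu> X ^ r" using nu_le_power True by blast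
      show "X ^ r = nu (X ^ r)" if "nu (X ^ (r - 1) * Y) = nu (X ^ r)"
        using ghost_if_add_eq absorbs that by metis
    qed
  next
    case False
    then have le: "X \<le>\<^sub>\<nu> Y" using nu_le_total by blast
    have sum: "X + Y = Y" using add_eq_right_if_nu_less[OF le] \<open>nu X \<noteq> nu Y\<close> by simp
    have absorbs: "Y ^ r = Y ^ r + Y ^ (r - 1) * X"
      using arg_cong[OF sum, of "\<lambda>z. Y ^ (r - 1) * z"] rr by (simp add: algebra_simps)
    have le1: "Y ^ (r - 1) * X \<le>\<^sub>\<nu> Y ^ r" using nu_le_if_add_eq absorbs by metis
    have le2: "X ^ (r - 1) * Y \<le>\<^sub>\<nu> Y ^ (r - 1) * X"
    proof -
      have "X ^ r' * (X * Y) \<le>\<^sub>\<nu> Y ^ r' * (X * Y)" using nu_le_mult nu_le_power[OF le] by blast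
      then show ?thesis using rr by (simp add: algebra_simps)
    qed
    have "Y ^ r + X ^ r + X ^ (r - 1) * Y = Y ^ r + X ^ r"
    proof (rule add_absorb_dominated)
      show "X ^ (r - 1) * Y \<le>\<^sub>\<nu> Y ^ r" using nu_le_trans le1 le2 by blast
      show "X ^ r \<le>\<^sub>\<nu> Y ^ r" using nu_le_power le by blast
      show "Y ^ r = nu (Y ^ r)" if tie: "nu (X ^ (r - 1) * Y) = nu (Y ^ r)"
      proof -
        have "Y ^ r \<le>\<^sub>\<nu> Y ^ (r - 1) * X"
          using nu_le_trans nu_le_if_nu_eq[OF tie[symmetric]] le2 by blast
        then have "nu (Y ^ r) = nu (Y ^ (r - 1) * X)" using nu_le_antisym le1 by blast
        then show ?thesis using ghost_if_add_eq absorbs by metis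
      qed
    qed
    then show ?thesis by (simp add: add.commute)
  qed
qed

section \<open>Multiplying a minimal symmetrization by e_k\<close>

lemma monomial_eval_move_unit_absorbed:
  fixes x :: "nat \<Rightarrow> 'a"
  assumes pq: "p < length f" "q < length f" "p \<noteq> q" and gap: "f ! q + 2 \<le> f ! p"
  shows "monomial_eval f x + monomial_eval (f[p := f ! q, q := f ! p]) x + monomial_eval (move_unit p q f) x
       = monomial_eval f x + monomial_eval (f[p := f ! q, q := f ! p]) x"
proof -
  define R where "R = (\<Prod>t\<in>{..<length f} - {p, q}. x t ^ (f ! t))"
  define r where "r = f ! p - f ! q"
  have r: "f ! p = f ! q + r" "2 \<le> r" using gap by (simp_all add: r_def)
  define Q where "Q = R * x p ^ (f ! q) * x q ^ (f ! q)"
  have split: "monomial_eval v x = R * (x p ^ (v ! p) * x q ^ (v ! q))"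
    if "length v = length f" "\<forall>t. t \<noteq> p \<longrightarrow> t \<noteq> q \<longrightarrow> v ! t = f ! t" for v
  proof -
    have "(\<Prod>t\<in>{..<length f} - {p, q}. x t ^ (v ! t)) = R"
      unfolding R_def using that(2) by (intro prod.cong) auto
    then show ?thesis using monomial_eval_split_pair[of p v q x] pq that(1) by simp
  qed
  have "monomial_eval f x = Q * x p ^ r"
    using split[of f] r(1) by (simp add: Q_def power_add algebra_simps)
  moreover have "monomial_eval (f[p := f ! q, q := f ! p]) x = Q * x q ^ r"
    using split[of "f[p := f ! q, q := f ! p]"] pq r(1) by (simp add: Q_def power_add algebra_simps)
  moreover have "monomial_eval (move_unit p q f) x = Q * (x p ^ (r - 1) * x q)"
  proof -
    have "f ! p - 1 = f ! q + (r - 1)" using r by simp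
    then have "monomial_eval (move_unit p q f) x = R * (x p ^ (f ! q + (r - 1)) * x q ^ (f ! q + 1))"
      using split[of "move_unit p q f"] pq by (simp add: move_unit_def)
    then show ?thesis by (simp add: Q_def power_add algebra_simps)
  qed
  ultimately show ?thesis
    using power_add_absorbs_mixed[OF r(2), of "x p" "x q"] by (simp add: distrib_left[symmetric])
qed

lemma Minsym_covers_move_unit:
  fixes x :: "nat \<Rightarrow> 'a"
  assumes f: "length f = n" and ij: "i < n" "j < n" "i \<noteq> j" and less: "f ! j < f ! i"
    and cov: "Minsym_covers n c x f"
  shows "Minsym_covers n c x (move_unit i j f)"
proof (cases "f ! i = f ! j + 1")
  case True
  then show ?thesis
    using Minsym_covers_sym_orbit[OF f _ cov] move_unit_in_sym_orbit[of i f j] f ij by simp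
next
  case False
  have "Minsym n c x + monomial_eval e x = Minsym n c x"
    if e: "e \<in> sym_orbit n (move_unit i j f)" for e
  proof -
    obtain f' p q where f': "f' \<in> sym_orbit n f" and pq: "p < n" "q < n" "p \<noteq> q"
      and f'_pq: "f' ! p = f ! i" "f' ! q = f ! j" and e_eq: "e = move_unit p q f'"
      using sym_orbit_move_unit[OF f ij e] by blast
    define h' where "h' = f'[p := f' ! q, q := f' ! p]"
    have len: "length f' = n" using length_sym_orbit[OF f'] .
    have "mset h' = mset f'"
      unfolding h'_def using mset_swap[of q f' p] pq len by (simp add: list_update_swap)
    then have h': "h' \<in> sym_orbit n f"
      using f' sym_orbit_eq_mset[OF len] sym_orbit_eq[OF f f'] by blast
    have "f' \<noteq> h'"
      using pq len f'_pq False less by (auto simp: h'_def dest: arg_cong[of _ _ "\<lambda>v. v ! p"])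
    moreover have "monomial_eval f' x + monomial_eval h' x + monomial_eval e x
        = monomial_eval f' x + monomial_eval h' x"
      unfolding e_eq h'_def
      by (rule monomial_eval_move_unit_absorbed) (use pq len f'_pq less False in auto)
    ultimately show ?thesis by (rule Minsym_absorbs_if_pair[OF cov f f' h'])
  qed
  then show ?thesis unfolding Minsym_covers_def by blast
qed

lemma Minsym_covers_add_indicator:
  fixes x :: "nat \<Rightarrow> 'a"
  assumes c: "length c = n" "sorted_wrt (\<ge>) c" and k: "k \<le> n" and \<sigma>: "\<sigma> permutes {0..<n}"
  shows "S \<subseteq> {0..<n} \<Longrightarrow> card S = k \<Longrightarrow>
    Minsym_covers n (add_indicator {..<k} c) x (add_indicator S (map (\<lambda>j. c ! inv \<sigma> j) [0..<n]))"
proof (induction "card (S - \<sigma> ` {..<k})" arbitrary: S)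
  case 0
  have "S \<subseteq> \<sigma> ` {..<k}" using 0 finite_subset[OF 0(2)] by simp
  then have "S = \<sigma> ` {..<k}"
    using card_subset_eq[of "\<sigma> ` {..<k}" S] permutes_image_lessThan[OF \<sigma> k] 0 by simp
  then have "add_indicator S (map (\<lambda>j. c ! inv \<sigma> j) [0..<n])
      \<in> sym_orbit n (add_indicator {..<k} c)"
    using add_indicator_permuted[OF c(1) \<sigma>] sym_orbit_memI[OF \<sigma>] by simp
  then show ?case
    unfolding Minsym_covers_def using sym_orbit_eq[of "add_indicator {..<k} c"] c(1) by simp
next
  case (Suc m S)
  define T where "T = \<sigma> ` {..<k}"
  define d where "d = map (\<lambda>j. c ! inv \<sigma> j) [0..<n]"
  have T: "T \<subseteq> {0..<n}" "card T = k" unfolding T_def using permutes_image_lessThan[OF \<sigma> k] by auto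
  have fin: "finite S" using finite_subset[OF Suc(3)] by simp
  have "S - T \<noteq> {}" using Suc(2) unfolding T_def by (metis card.empty nat.distinct(1))
  then obtain j where j: "j \<in> S" "j \<notin> T" by blast
  have "\<not> T \<subseteq> S"
  proof
    assume "T \<subseteq> S"
    then have "T = S" using card_subset_eq[OF fin] T Suc(4) by simp
    then show False using j by simp
  qed
  then obtain i where i: "i \<in> T" "i \<notin> S" by blast
  have ij: "i < n" "j < n" "i \<noteq> j" using i j T Suc(3) by auto
  define S' where "S' = insert i (S - {j})"
  have "card S > 0" using j fin card_gt_0_iff by blast
  then have S': "S' \<subseteq> {0..<n}" "card S' = k" using Suc(3,4) i j ij fin by (auto simp: S'_def)
  have "S' - T = (S - T) - {j}" using i j unfolding S'_def by auto
  then have "m = card (S' - \<sigma> ` {..<k})" using Suc(2) j fin unfolding T_def by simp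
  from Suc(1)[OF this S'] have cov: "Minsym_covers n (add_indicator {..<k} c) x (add_indicator S' d)"
    unfolding d_def .
  have "inv \<sigma> i < k" "\<not> inv \<sigma> j < k"
    using i j permutes_image_iff_inv[OF \<sigma>] unfolding T_def by auto
  then have "d ! j \<le> d ! i"
    using sorted_wrt_ge_nth_le[OF c(2)] permutes_inv_less[OF \<sigma>] ij c(1) by (simp add: d_def)
  then have "add_indicator S' d ! j < add_indicator S' d ! i" using ij by (simp add: d_def S'_def)
  moreover have "add_indicator S d = move_unit i j (add_indicator S' d)"
    unfolding S'_def using ij i j by (intro add_indicator_exchange) (simp_all add: d_def)
  ultimately show ?case
    using Minsym_covers_move_unit[OF _ ij _ cov] unfolding d_def by simp
qed

lemma Minsym_mult_esym:
  fixes x :: "nat \<Rightarrow> 'a"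
  assumes c: "length c = n" "sorted_wrt (\<ge>) c" and k: "k \<le> n"
  shows "Minsym n c x * esym n k x = Minsym n (add_indicator {..<k} c) x"
proof -
  define c' where "c' = add_indicator {..<k} c"
  define P where "P = sym_orbit n c \<times> {S. S \<subseteq> {0..<n} \<and> card S = k}"
  define G where "G = {(d, S)\<in>P. add_indicator S d \<in> sym_orbit n c'}"
  define m where "m = (\<lambda>(d, S). monomial_eval (add_indicator S d) x)"
  have "finite P"
    unfolding P_def using finite_sym_orbit by (auto intro: finite_subset[of _ "Pow {0..<n}"])
  have "G \<subseteq> P" unfolding G_def by auto
  have "Minsym n c x * esym n k x = sum m (P - G) + sum m G"
    unfolding Minsym_mult_esym_expand[OF c(1)] m_def P_def[symmetric]
    using sum.subset_diff[OF \<open>G \<subseteq> P\<close> \<open>finite P\<close>] by simp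
  moreover have "sum m G = Minsym n c' x"
    using sum.reindex_bij_betw[OF bij_betw_add_indicator_sym_orbit[OF c k], of "\<lambda>e. monomial_eval e x"]
    unfolding Minsym_def c'_def G_def P_def m_def by (simp add: case_prod_beta)
  moreover have "Minsym n c' x + sum m (P - G) = Minsym n c' x"
  proof (rule add_sum_absorb)
    show "finite (P - G)" using \<open>finite P\<close> by simp
    show "\<forall>p\<in>P - G. Minsym n c' x + m p = Minsym n c' x"
    proof
      fix p assume "p \<in> P - G"
      then obtain d S where p: "p = (d, S)" and d: "d \<in> sym_orbit n c"
        and S: "S \<subseteq> {0..<n}" "card S = k" and out: "add_indicator S d \<notin> sym_orbit n c'"
        unfolding P_def G_def by auto
      obtain \<sigma> where \<sigma>: "\<sigma> permutes {0..<n}" and d_eq: "d = map (\<lambda>j. c ! inv \<sigma> j) [0..<n]"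
        using d by (rule sym_orbit_elim)
      have cov: "Minsym_covers n c' x (add_indicator S d)"
        unfolding c'_def d_eq by (rule Minsym_covers_add_indicator[OF c k \<sigma> S])
      have self: "add_indicator S d \<in> sym_orbit n (add_indicator S d)"
        using sym_orbit_self[of "add_indicator S d" n] length_sym_orbit[OF d] by simp
      then have "sym_orbit n (add_indicator S d) \<noteq> sym_orbit n c'" using out by auto
      then show "Minsym n c' x + m p = Minsym n c' x"
        using cov self unfolding Minsym_covers_def m_def p by auto
    qed
  qed
  ultimately show ?thesis unfolding c'_def by (simp add: add.commute)
qed

lemma Minsym_sorted_eq_prod_esym:
  assumes "sorted_wrt (\<ge>) c" "length c = n"
  shows "\<exists>ks. set ks \<subseteq> {1..n} \<and> (\<forall>x :: nat \<Rightarrow> 'a. Minsym n c x = (\<Prod>k\<leftarrow>ks. esym n k x))"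
  using assms
proof (induction "sum_list c" arbitrary: c rule: less_induct)
  case less
  show ?case
  proof (cases "sum_list c = 0")
    case True
    have "Minsym n c x = 1" for x :: "nat \<Rightarrow> 'a"
      using Minsym_eq_one_if_sum_list_zero[OF less.prems(2) True] .
    then show ?thesis by (intro exI[of _ "[]"]) simp
  next
    case False
    obtain k c0 where k: "0 < k" "k \<le> length c" and c0: "length c0 = length c" "sorted_wrt (\<ge>) c0"
      and decomp: "c = add_indicator {..<k} c0" and smaller: "sum_list c0 < sum_list c"
      using sorted_desc_decompose[OF less.prems(1) False] .
    have "length c0 = n" using c0(1) less.prems(2) by simp
    with smaller c0(2) obtain ks where ks: "set ks \<subseteq> {1..n}"
      "\<forall>x :: nat \<Rightarrow> 'a. Minsym n c0 x = (\<Prod>k\<leftarrow>ks. esym n k x)"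
      using less.hyps by blast
    have "Minsym n c x = (\<Prod>k\<leftarrow>k # ks. esym n k x)" for x :: "nat \<Rightarrow> 'a"
    proof -
      have "Minsym n c x = Minsym n c0 x * esym n k x"
        unfolding decomp using Minsym_mult_esym[OF \<open>length c0 = n\<close> c0(2)] k(2) less.prems(2) by simp
      then show ?thesis using ks(2) by (simp add: mult.commute)
    qed
    moreover have "set (k # ks) \<subseteq> {1..n}" using ks(1) k less.prems(2) by auto
    ultimately show ?thesis by blast
  qed
qed

end

theorem lemma5p8:
  fixes n :: nat and c :: "nat list"
  assumes "supertropical TYPE('a::{comm_semiring_0, comm_monoid_mult})"
    and "length c = n"
  shows "\<exists>ks. set ks \<subseteq> {1..n} \<and>
           (\<forall>x :: nat \<Rightarrow> 'a. Minsym n c x = (\<Prod>k\<leftarrow>ks. esym n k x))"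
proof -
  have "sorted_wrt (\<ge>) (rev (sort c))" "length (rev (sort c)) = n"
    using assms(2) by (simp_all add: sorted_wrt_rev)
  then obtain ks where ks: "set ks \<subseteq> {1..n}"
    "\<forall>x :: nat \<Rightarrow> 'a. Minsym n (rev (sort c)) x = (\<Prod>k\<leftarrow>ks. esym n k x)"
    using Minsym_sorted_eq_prod_esym[OF assms(1)] by blast
  have "Minsym n c x = Minsym n (rev (sort c)) x" for x :: "nat \<Rightarrow> 'a"
    using Minsym_sort[OF assms(2)] by (rule fun_cong)
  then show ?thesis using ks by (intro exI[of _ ks]) simp
qed

end
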